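(* Let $\mathcal F$ be a proper filter on $\omega$ and consider the game $\mathfrak G(\mathcal F,\omega,\mathcal F^+)$. Then (1) player I has a winning strategy if and only if $\mathcal F$ is not weakly Ramsey; (2) player II has a winning strategy if and only if $\mathcal F$ is $\omega$-$+$-diagonalizable.
   Context: A filter on $\omega$ is a family $\mathcal F\subseteq\mathcal P(\omega)$ closed under finite intersections and supersets and containing all cofinite sets; it is proper if all its members are infinite. $\mathcal F^+=\{X\subseteq\omega:\omega\setminus X\notin\mathcal F\}$. $X\subseteq^*Y$ means $X\setminus Y$ is finite. Game $\mathfrak G(\mathcal X,\omega,\mathcal Z)$: at each stage $k\in\omega$, player I chooses $X_k\in\mathcal X$ and player II responds with $n_k\in X_k$; II wins if $\{n_k:k\in\omega\}\in\mathcal Z$, otherwise I wins. A tree is a set $T$ of finite sequences of natural numbers containing the empty sequence and closed under initial segments; it is an $\mathcal F$-tree if for each $\bar s\in T$ there is $X_{\bar s}\in\mathcal F$ with $\bar s^\frown n\in T$ for all $n\in X_{\bar s}$. A branch is an infinite sequence all of whose finite initial segments lie in $T$; it is "in" a family if its set of values belongs to that family. $\mathcal F$ is weakly Ramsey if every $\mathcal F$-tree has a branch in $\mathcal F^+$. $\mathcal F$ is $\omega$-$+$-diagonalizable if there are $X_n\in\mathcal F^+$ ($n\in\omega$) such that for every $Y\in\mathcal F$ there is $n$ with $X_n\subseteq^*Y$. *)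

theory Defs
  imports Main
begin

definition is_filter :: "nat set set \<Rightarrow> bool" where
  "is_filter F \<longleftrightarrow>
     (\<forall>A\<in>F. \<forall>B\<in>F. A \<inter> B \<in> F) \<and>
     (\<forall>A\<in>F. \<forall>B. A \<subseteq> B \<longrightarrow> B \<in> F) \<and>
     (\<forall>A. finite (UNIV - A) \<longrightarrow> A \<in> F)"

definition proper_filter :: "nat set set \<Rightarrow> bool" where
  "proper_filter F \<longleftrightarrow> is_filter F \<and> (\<forall>A\<in>F. infinite A)"

definition filter_plus :: "nat set set \<Rightarrow> nat set set" where
  "filter_plus F = {X. (UNIV - X) \<notin> F}"

text \<open>A strategy for player I maps the finite sequence of
  II's previous moves (which determines the whole history, I's moves being given
  by the strategy) to I's next move. A strategy for player II maps the finite
  sequence of I's moves so far (X_0, ..., X_k) to II's response n_k.\<close>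

definition I_strategy :: "nat set set \<Rightarrow> (nat list \<Rightarrow> nat set) \<Rightarrow> bool" where
  "I_strategy F \<sigma> \<longleftrightarrow> (\<forall>s. \<sigma> s \<in> F)"

definition I_winning :: "nat set set \<Rightarrow> (nat list \<Rightarrow> nat set) \<Rightarrow> bool" where
  "I_winning F \<sigma> \<longleftrightarrow> I_strategy F \<sigma> \<and>
     (\<forall>n :: nat \<Rightarrow> nat. (\<forall>k. n k \<in> \<sigma> (map n [0..<k])) \<longrightarrow>
        range n \<notin> filter_plus F)"

definition II_strategy :: "nat set set \<Rightarrow> (nat set list \<Rightarrow> nat) \<Rightarrow> bool" where
  "II_strategy F \<tau> \<longleftrightarrow> (\<forall>xs. xs \<noteq> [] \<and> set xs \<subseteq> F \<longrightarrow> \<tau> xs \<in> last xs)"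

definition II_winning :: "nat set set \<Rightarrow> (nat set list \<Rightarrow> nat) \<Rightarrow> bool" where
  "II_winning F \<tau> \<longleftrightarrow> II_strategy F \<tau> \<and>
     (\<forall>X :: nat \<Rightarrow> nat set. (\<forall>k. X k \<in> F) \<longrightarrow>
        range (\<lambda>k. \<tau> (map X [0..<Suc k])) \<in> filter_plus F)"

definition is_tree :: "nat list set \<Rightarrow> bool" where
  "is_tree T \<longleftrightarrow> [] \<in> T \<and> (\<forall>s\<in>T. \<forall>k. take k s \<in> T)"

definition F_tree :: "nat set set \<Rightarrow> nat list set \<Rightarrow> bool" where
  "F_tree F T \<longleftrightarrow> is_tree T \<and> (\<forall>s\<in>T. \<exists>X\<in>F. \<forall>n\<in>X. s @ [n] \<in> T)"

definition branch :: "nat list set \<Rightarrow> (nat \<Rightarrow> nat) \<Rightarrow> bool" where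
  "branch T f \<longleftrightarrow> (\<forall>k. map f [0..<k] \<in> T)"

definition weakly_Ramsey :: "nat set set \<Rightarrow> bool" where
  "weakly_Ramsey F \<longleftrightarrow>
     (\<forall>T. F_tree F T \<longrightarrow> (\<exists>f. branch T f \<and> range f \<in> filter_plus F))"

definition omega_plus_diagonalizable :: "nat set set \<Rightarrow> bool" where
  "omega_plus_diagonalizable F \<longleftrightarrow>
     (\<exists>X :: nat \<Rightarrow> nat set. (\<forall>n. X n \<in> filter_plus F) \<and>
        (\<forall>Y\<in>F. \<exists>n. finite (X n - Y)))"

end

(*
  (1) Strategies of player I and F-trees are two views of the same object: the positions
  consistent with a strategy form an F-tree whose branches are exactly the plays following
  it, and conversely an F-tree yields the strategy "play the successor set of the current
  node".

  (2) Given a diagonalizing family D_m in F^+, player II answers in round k = <m, j> with a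
  point of D_m (inside I's set, which is possible since D_m meets every member of F
  infinitely) that is at least k; then her answers meet every D_m infinitely, so their
  complement cannot lie in F. Conversely, for a winning strategy of II the set of her
  possible answers at a position is in F^+, since otherwise I could play its complement.
  Fixing for each possible answer one move of I that elicits it, only countably many
  positions matter. Their answer sets diagonalize F: if none of them were almost contained
  in some Y in F, player I could steer the play so that all of II's answers avoid Y.
*)

theory Submission
  imports Defs "HOL-Library.Countable" "HOL-Library.Infinite_Set"
begin

lemma filter_UNIV: "is_filter F \<Longrightarrow> UNIV \<in> F"
  unfolding is_filter_def by auto

lemma filter_Int: "is_filter F \<Longrightarrow> A \<in> F \<Longrightarrow> B \<in> F \<Longrightarrow> A \<inter> B \<in> F"
  unfolding is_filter_def by blast

lemma filter_mono: "is_filter F \<Longrightarrow> A \<in> F \<Longrightarrow> A \<subseteq> B \<Longrightarrow> B \<in> F"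
  unfolding is_filter_def by blast

lemma filter_cofinite: "is_filter F \<Longrightarrow> finite (- A) \<Longrightarrow> A \<in> F"
  unfolding is_filter_def Compl_eq_Diff_UNIV by blast

lemma filter_plus_iff: "X \<in> filter_plus F \<longleftrightarrow> - X \<notin> F"
  unfolding filter_plus_def Compl_eq_Diff_UNIV by simp

lemma not_filter_plus_if_disjoint:
  assumes "is_filter F" "Y \<in> F" "X \<inter> Y = {}"
  shows "X \<notin> filter_plus F"
proof -
  have "Y \<subseteq> - X" using assms(3) by blast
  then show ?thesis using assms filter_mono filter_plus_iff by metis
qed

lemma filter_plus_Int_infinite:
  assumes F: "is_filter F" and X: "X \<in> filter_plus F" and Y: "Y \<in> F"
  shows "infinite (X \<inter> Y)"
proof
  assume "finite (X \<inter> Y)"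
  then have "- (X \<inter> Y) \<in> F" using F filter_cofinite by simp
  then have "Y \<inter> - (X \<inter> Y) \<in> F" using F Y filter_Int by blast
  moreover have "X \<inter> (Y \<inter> - (X \<inter> Y)) = {}" by blast
  ultimately show False using F X not_filter_plus_if_disjoint by blast
qed

definition I_play_tree :: "(nat list \<Rightarrow> nat set) \<Rightarrow> nat list set" where
  "I_play_tree \<sigma> = {s. \<forall>k < length s. s ! k \<in> \<sigma> (take k s)}"

lemma snoc_in_I_play_tree_iff:
  "s @ [n] \<in> I_play_tree \<sigma> \<longleftrightarrow> s \<in> I_play_tree \<sigma> \<and> n \<in> \<sigma> s"
  unfolding I_play_tree_def by (auto simp: nth_append less_Suc_eq)

lemma F_tree_I_play_tree:
  assumes "I_strategy F \<sigma>"
  shows "F_tree F (I_play_tree \<sigma>)"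
  unfolding F_tree_def is_tree_def
proof (intro conjI ballI allI)
  show "[] \<in> I_play_tree \<sigma>" unfolding I_play_tree_def by simp
next
  fix s k assume "s \<in> I_play_tree \<sigma>"
  then show "take k s \<in> I_play_tree \<sigma>" unfolding I_play_tree_def by (auto simp: min_def)
next
  fix s assume "s \<in> I_play_tree \<sigma>"
  then have "\<forall>n\<in>\<sigma> s. s @ [n] \<in> I_play_tree \<sigma>" by (simp add: snoc_in_I_play_tree_iff)
  moreover have "\<sigma> s \<in> F" using assms unfolding I_strategy_def by blast
  ultimately show "\<exists>X\<in>F. \<forall>n\<in>X. s @ [n] \<in> I_play_tree \<sigma>" by blast
qed

lemma branch_I_play_tree_iff:
  "branch (I_play_tree \<sigma>) g \<longleftrightarrow> (\<forall>k. g k \<in> \<sigma> (map g [0..<k]))"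
proof
  assume "branch (I_play_tree \<sigma>) g"
  then have "map g [0..<k] @ [g k] \<in> I_play_tree \<sigma>" for k
    unfolding branch_def by (metis list.simps(8,9) map_append upt_Suc zero_le)
  then show "\<forall>k. g k \<in> \<sigma> (map g [0..<k])" by (simp add: snoc_in_I_play_tree_iff)
next
  assume g: "\<forall>k. g k \<in> \<sigma> (map g [0..<k])"
  have "map g [0..<k] \<in> I_play_tree \<sigma>" for k
  proof (induction k)
    case 0
    show ?case by (simp add: I_play_tree_def)
  next
    case (Suc k)
    then show ?case using g by (simp add: snoc_in_I_play_tree_iff)
  qed
  then show "branch (I_play_tree \<sigma>) g" unfolding branch_def by blast
qed

lemma not_weakly_Ramsey_if_I_winning:
  assumes "I_winning F \<sigma>"
  shows "\<not> weakly_Ramsey F"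
proof
  assume "weakly_Ramsey F"
  moreover have "F_tree F (I_play_tree \<sigma>)"
    using assms F_tree_I_play_tree unfolding I_winning_def by blast
  ultimately obtain g where "branch (I_play_tree \<sigma>) g" "range g \<in> filter_plus F"
    unfolding weakly_Ramsey_def by blast
  then show False using assms unfolding branch_I_play_tree_iff I_winning_def by blast
qed

definition tree_I_strategy :: "nat set set \<Rightarrow> nat list set \<Rightarrow> nat list \<Rightarrow> nat set" where
  "tree_I_strategy F T s = (SOME X. X \<in> F \<and> (s \<in> T \<longrightarrow> (\<forall>n\<in>X. s @ [n] \<in> T)))"

lemma tree_I_strategy:
  assumes "is_filter F" "F_tree F T"
  shows "tree_I_strategy F T s \<in> F"
    and "s \<in> T \<Longrightarrow> n \<in> tree_I_strategy F T s \<Longrightarrow> s @ [n] \<in> T"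
proof -
  have "\<exists>X. X \<in> F \<and> (s \<in> T \<longrightarrow> (\<forall>n\<in>X. s @ [n] \<in> T))"
    using assms filter_UNIV unfolding F_tree_def by (cases "s \<in> T") auto
  from someI_ex[OF this] show "tree_I_strategy F T s \<in> F"
    and "s \<in> T \<Longrightarrow> n \<in> tree_I_strategy F T s \<Longrightarrow> s @ [n] \<in> T"
    unfolding tree_I_strategy_def by blast+
qed

lemma branch_if_follows_tree_I_strategy:
  assumes "is_filter F" "F_tree F T" and g: "\<forall>k. g k \<in> tree_I_strategy F T (map g [0..<k])"
  shows "branch T g"
proof -
  have "map g [0..<k] \<in> T" for k
  proof (induction k)
    case 0
    show ?case using assms(2) unfolding F_tree_def is_tree_def by simp
  next
    case (Suc k)
    then show ?case using tree_I_strategy(2)[OF assms(1,2)] g by simp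
  qed
  then show ?thesis unfolding branch_def by blast
qed

lemma I_winning_if_not_weakly_Ramsey:
  assumes F: "is_filter F" and "\<not> weakly_Ramsey F"
  shows "\<exists>\<sigma>. I_winning F \<sigma>"
proof -
  obtain T where T: "F_tree F T" and no_branch: "\<And>g. branch T g \<Longrightarrow> range g \<notin> filter_plus F"
    using assms(2) unfolding weakly_Ramsey_def by blast
  have "I_winning F (tree_I_strategy F T)"
    using tree_I_strategy(1)[OF F T] branch_if_follows_tree_I_strategy[OF F T] no_branch
    unfolding I_winning_def I_strategy_def by blast
  then show ?thesis by blast
qed

lemma I_winning_iff_not_weakly_Ramsey:
  "is_filter F \<Longrightarrow> (\<exists>\<sigma>. I_winning F \<sigma>) \<longleftrightarrow> \<not> weakly_Ramsey F"
  using I_winning_if_not_weakly_Ramsey not_weakly_Ramsey_if_I_winning by blast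

lemma infinite_Int_range_if_diagonal:
  fixes a :: "nat \<Rightarrow> nat" and D :: "nat \<Rightarrow> nat set"
  assumes "\<And>k. a k \<in> D (fst (prod_decode k))" "\<And>k. k \<le> a k"
  shows "infinite (D m \<inter> range a)"
  unfolding infinite_nat_iff_unbounded_le
proof
  fix b
  define k where "k = prod_encode (m, b)"
  have "a k \<in> D m" using assms(1)[of k] by (simp add: k_def)
  moreover have "b \<le> a k" using le_prod_encode_2 assms(2) order_trans unfolding k_def by blast
  ultimately show "\<exists>n\<ge>b. n \<in> D m \<inter> range a" by blast
qed

text \<open>In round k player I's moves so far form a list of length k + 1.\<close>

definition diagonal_II_strategy :: "(nat \<Rightarrow> nat set) \<Rightarrow> nat set list \<Rightarrow> nat" where
  "diagonal_II_strategy D xs =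
     (SOME n. n \<in> last xs \<inter> D (fst (prod_decode (length xs - 1))) \<and> length xs - 1 \<le> n)"

lemma diagonal_II_strategy:
  assumes "is_filter F" "\<And>m. D m \<in> filter_plus F" "last xs \<in> F"
  shows "diagonal_II_strategy D xs \<in> last xs \<inter> D (fst (prod_decode (length xs - 1)))"
    and "length xs - 1 \<le> diagonal_II_strategy D xs"
proof -
  have "infinite (D (fst (prod_decode (length xs - 1))) \<inter> last xs)"
    using assms filter_plus_Int_infinite by blast
  then have "\<exists>n. n \<in> last xs \<inter> D (fst (prod_decode (length xs - 1))) \<and> length xs - 1 \<le> n"
    unfolding infinite_nat_iff_unbounded_le by blast
  from someI_ex[OF this]
  show "diagonal_II_strategy D xs \<in> last xs \<inter> D (fst (prod_decode (length xs - 1)))"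
    and "length xs - 1 \<le> diagonal_II_strategy D xs"
    unfolding diagonal_II_strategy_def by blast+
qed

lemma II_winning_if_omega_plus_diagonalizable:
  assumes F: "is_filter F" and "omega_plus_diagonalizable F"
  shows "\<exists>\<tau>. II_winning F \<tau>"
proof -
  obtain D :: "nat \<Rightarrow> nat set"
    where D: "\<And>m. D m \<in> filter_plus F" and diag: "\<And>Y. Y \<in> F \<Longrightarrow> \<exists>m. finite (D m - Y)"
    using assms(2) unfolding omega_plus_diagonalizable_def by blast
  let ?\<tau> = "diagonal_II_strategy D"
  have "II_strategy F ?\<tau>"
    unfolding II_strategy_def
  proof (intro allI impI)
    fix xs :: "nat set list"
    assume "xs \<noteq> [] \<and> set xs \<subseteq> F"
    then have "last xs \<in> F" by auto
    from diagonal_II_strategy(1)[of F D xs, OF F D this] show "?\<tau> xs \<in> last xs" by blast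
  qed
  moreover have "range (\<lambda>k. ?\<tau> (map X [0..<Suc k])) \<in> filter_plus F" if X: "\<forall>k. X k \<in> F" for X
  proof -
    define a where "a k = ?\<tau> (map X [0..<Suc k])" for k
    have "a k \<in> D (fst (prod_decode k)) \<and> k \<le> a k" for k
    proof -
      have "last (map X [0..<Suc k]) \<in> F" using X by simp
      from diagonal_II_strategy[of F D, OF F D this] show ?thesis unfolding a_def by simp
    qed
    then have "infinite (D m \<inter> range a)" for m
      using infinite_Int_range_if_diagonal[of a D m] by blast
    moreover have "D m - - range a = D m \<inter> range a" for m by blast
    ultimately have "- range a \<notin> F" using diag by metis
    then show ?thesis unfolding a_def filter_plus_iff .
  qed
  ultimately show ?thesis unfolding II_winning_def by blast
qed

lemma II_strategy_snocD:
  assumes "II_strategy F \<tau>" "set p \<subseteq> F" "Y \<in> F"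
  shows "\<tau> (p @ [Y]) \<in> Y"
proof -
  have "p @ [Y] \<noteq> [] \<and> set (p @ [Y]) \<subseteq> F" using assms(2,3) by simp
  then show ?thesis using assms(1) unfolding II_strategy_def by (metis last_snoc)
qed

definition II_answers :: "nat set set \<Rightarrow> (nat set list \<Rightarrow> nat) \<Rightarrow> nat set list \<Rightarrow> nat set" where
  "II_answers F \<tau> p = {\<tau> (p @ [Y]) | Y. Y \<in> F}"

lemma II_answers_filter_plus:
  assumes "II_strategy F \<tau>" "set p \<subseteq> F"
  shows "II_answers F \<tau> p \<in> filter_plus F"
proof (rule ccontr)
  assume "II_answers F \<tau> p \<notin> filter_plus F"
  then have Z: "- II_answers F \<tau> p \<in> F" unfolding filter_plus_iff by simp
  then have "\<tau> (p @ [- II_answers F \<tau> p]) \<in> - II_answers F \<tau> p"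
    using II_strategy_snocD assms by blast
  moreover have "\<tau> (p @ [- II_answers F \<tau> p]) \<in> II_answers F \<tau> p"
    using Z unfolding II_answers_def by blast
  ultimately show False by blast
qed

definition eliciting_move :: "nat set set \<Rightarrow> (nat set list \<Rightarrow> nat) \<Rightarrow> nat set list \<Rightarrow> nat \<Rightarrow> nat set" where
  "eliciting_move F \<tau> p n = (SOME Y. Y \<in> F \<and> (n \<in> II_answers F \<tau> p \<longrightarrow> \<tau> (p @ [Y]) = n))"

lemma eliciting_move:
  assumes "is_filter F"
  shows "eliciting_move F \<tau> p n \<in> F"
    and "n \<in> II_answers F \<tau> p \<Longrightarrow> \<tau> (p @ [eliciting_move F \<tau> p n]) = n"
proof -
  have "\<exists>Y. Y \<in> F \<and> (n \<in> II_answers F \<tau> p \<longrightarrow> \<tau> (p @ [Y]) = n)"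
    using filter_UNIV[OF assms] unfolding II_answers_def by blast
  from someI_ex[OF this] show "eliciting_move F \<tau> p n \<in> F"
    and "n \<in> II_answers F \<tau> p \<Longrightarrow> \<tau> (p @ [eliciting_move F \<tau> p n]) = n"
    unfolding eliciting_move_def by blast+
qed

definition elicited_position :: "nat set set \<Rightarrow> (nat set list \<Rightarrow> nat) \<Rightarrow> nat list \<Rightarrow> nat set list" where
  "elicited_position F \<tau> s = foldl (\<lambda>p n. p @ [eliciting_move F \<tau> p n]) [] s"

lemma elicited_position_snoc:
  "elicited_position F \<tau> (s @ [n]) =
     elicited_position F \<tau> s @ [eliciting_move F \<tau> (elicited_position F \<tau> s) n]"
  unfolding elicited_position_def by simp

lemma elicited_position_subset:
  assumes "is_filter F"
  shows "set (elicited_position F \<tau> s) \<subseteq> F"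
proof (induction s rule: rev_induct)
  case Nil
  show ?case by (simp add: elicited_position_def)
next
  case (snoc n s)
  then show ?case using eliciting_move(1)[OF assms] by (simp add: elicited_position_snoc)
qed

lemma play_avoiding_if_answers_not_subset:
  assumes F: "is_filter F"
    and not_subset: "\<And>s. \<not> II_answers F \<tau> (elicited_position F \<tau> s) \<subseteq> Y"
  shows "\<exists>X. (\<forall>k. X k \<in> F) \<and> (\<forall>k. \<tau> (map X [0..<Suc k]) \<notin> Y)"
proof -
  define answer where
    "answer s = (SOME n. n \<in> II_answers F \<tau> (elicited_position F \<tau> s) - Y)" for s
  have answer: "answer s \<in> II_answers F \<tau> (elicited_position F \<tau> s) - Y" for s
    using not_subset[of s] unfolding answer_def by (metis Diff_eq_empty_iff ex_in_conv someI_ex)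
  define answers where "answers k = ((\<lambda>s. s @ [answer s]) ^^ k) []" for k
  define X where
    "X k = eliciting_move F \<tau> (elicited_position F \<tau> (answers k)) (answer (answers k))" for k
  have position: "map X [0..<k] = elicited_position F \<tau> (answers k)" for k
  proof (induction k)
    case 0
    show ?case by (simp add: answers_def elicited_position_def)
  next
    case (Suc k)
    then show ?case by (simp add: answers_def X_def elicited_position_snoc)
  qed
  have "\<tau> (map X [0..<Suc k]) = answer (answers k)" for k
    using position[of k] eliciting_move(2)[OF F] answer unfolding X_def by simp
  then have "\<tau> (map X [0..<Suc k]) \<notin> Y" for k using answer by simp
  moreover have "X k \<in> F" for k using eliciting_move(1)[OF F] unfolding X_def by blast
  ultimately show ?thesis by blast
qed

lemma omega_plus_diagonalizable_if_countable_family: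
  fixes D :: "'a::countable \<Rightarrow> nat set"
  assumes "\<And>i. D i \<in> filter_plus F" "\<And>Y. Y \<in> F \<Longrightarrow> \<exists>i. finite (D i - Y)"
  shows "omega_plus_diagonalizable F"
proof -
  have "\<exists>n. finite ((D \<circ> from_nat) n - Y)" if Y: "Y \<in> F" for Y
  proof -
    obtain i :: 'a where "finite (D i - Y)" using assms(2)[OF Y] by blast
    then show ?thesis by (metis comp_apply from_nat_to_nat)
  qed
  moreover have "(D \<circ> from_nat) n \<in> filter_plus F" for n using assms(1) by simp
  ultimately show ?thesis unfolding omega_plus_diagonalizable_def by blast
qed

lemma omega_plus_diagonalizable_if_II_winning:
  assumes F: "is_filter F" and win: "II_winning F \<tau>"
  shows "omega_plus_diagonalizable F"
proof (rule omega_plus_diagonalizable_if_countable_family)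
  have strategy: "II_strategy F \<tau>" using win unfolding II_winning_def by blast
  show "II_answers F \<tau> (elicited_position F \<tau> s) \<in> filter_plus F" for s
    using II_answers_filter_plus[OF strategy elicited_position_subset[OF F]] .
  fix Y assume Y: "Y \<in> F"
  have "\<exists>s. II_answers F \<tau> (elicited_position F \<tau> s) \<subseteq> Y"
  proof (rule ccontr)
    assume "\<nexists>s. II_answers F \<tau> (elicited_position F \<tau> s) \<subseteq> Y"
    then obtain X where X: "\<forall>k. X k \<in> F" and avoid: "\<forall>k. \<tau> (map X [0..<Suc k]) \<notin> Y"
      using play_avoiding_if_answers_not_subset[OF F] by blast
    have "range (\<lambda>k. \<tau> (map X [0..<Suc k])) \<in> filter_plus F"
      using win X unfolding II_winning_def by blast
    moreover have "range (\<lambda>k. \<tau> (map X [0..<Suc k])) \<inter> Y = {}" using avoid by blast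
    ultimately show False using not_filter_plus_if_disjoint[OF F Y] by blast
  qed
  then show "\<exists>s. finite (II_answers F \<tau> (elicited_position F \<tau> s) - Y)"
    by (metis Diff_eq_empty_iff finite.emptyI)
qed

lemma II_winning_iff_omega_plus_diagonalizable:
  "is_filter F \<Longrightarrow> (\<exists>\<tau>. II_winning F \<tau>) \<longleftrightarrow> omega_plus_diagonalizable F"
  using II_winning_if_omega_plus_diagonalizable omega_plus_diagonalizable_if_II_winning by blast

theorem theorem2p7:
  assumes "proper_filter F"
  shows "((\<exists>\<sigma>. I_winning F \<sigma>) \<longleftrightarrow> \<not> weakly_Ramsey F) \<and>
         ((\<exists>\<tau>. II_winning F \<tau>) \<longleftrightarrow> omega_plus_diagonalizable F)"
proof -
  have F: "is_filter F" using assms unfolding proper_filter_def by blast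
  show ?thesis
    using I_winning_iff_not_weakly_Ramsey[OF F] II_winning_iff_omega_plus_diagonalizable[OF F]
    by blast
qed

end
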